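(* Let $\mu$ be a Borel measure on the Sorgenfrey line $\mathbb R_\ell$ such that there is an open subset $U$ of $\mathbb R_\ell$ with $0<\mu(U)<+\infty$ and $\mu(\{x\})=0$ for every $x\in U$. Then the continuous valuation $\overline\mu$ on $\mathcal Q\mathbb R_\ell$ (with its Scott topology) defined by $\overline\mu(\mathcal U)=\mu(\{x\in\mathbb R:\{x\}\in\mathcal U\})$ for Scott-open $\mathcal U\subseteq\mathcal Q\mathbb R_\ell$ is not point-continuous. In particular, taking $\mu=\lambda$ the Lebesgue measure, $\overline\lambda$ is not point-continuous.
   Context: The Sorgenfrey line $\mathbb R_\ell$ is the set of reals with the topology generated by the half-open intervals $[a,b[$, $a<b$; its Borel $\sigma$-algebra coincides with that of the usual real line. $\mathcal Q\mathbb R_\ell$ denotes the set of non-empty compact subsets of $\mathbb R_\ell$, ordered by reverse inclusion $\supseteq$; it is a dcpo (directed suprema are intersections), and it carries its Scott topology. For a Scott-open $\mathcal U$, the set $\{x\in\mathbb R:\{x\}\in\mathcal U\}$ is open in $\mathbb R_\ell$, so $\overline\mu$ is well-defined. A valuation on a space $X$ is a map $\nu:\mathcal OX\to[0,\infty]$ that is strict, monotone and modular; it is continuous if it preserves directed suprema of opens. A valuation $\nu$ is point-continuous if for every open $U$ and every real $r$ with $0\le r<\nu(U)$ there is a finite subset $A\subseteq U$ such that $\nu(V)>r$ for every open $V\supseteq A$. *)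

theory Defs
  imports "HOL-Analysis.Analysis" "HOL-Probability.Probability"
begin

definition sorgenfrey :: "real topology" where
  "sorgenfrey = topology_generated_by {{a..<b} | a b. a < b}"

text \<open>QR_l: non-empty compact subsets of the Sorgenfrey line (ordered by reverse inclusion).\<close>
definition QRl :: "real set set" where
  "QRl = {K. K \<noteq> {} \<and> compactin sorgenfrey K}"

definition rev_directed :: "real set set \<Rightarrow> bool" where
  "rev_directed D \<longleftrightarrow> D \<noteq> {} \<and> (\<forall>K1\<in>D. \<forall>K2\<in>D. \<exists>K3\<in>D. K3 \<subseteq> K1 \<and> K3 \<subseteq> K2)"

text \<open>Scott-open subsets of QR_l (directed suprema are intersections).\<close>
definition scott_open_QRl :: "real set set \<Rightarrow> bool" where
  "scott_open_QRl \<U> \<longleftrightarrow> \<U> \<subseteq> QRl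
     \<and> (\<forall>K\<in>\<U>. \<forall>K'\<in>QRl. K' \<subseteq> K \<longrightarrow> K' \<in> \<U>)
     \<and> (\<forall>D. D \<subseteq> QRl \<and> rev_directed D \<and> \<Inter>D \<in> \<U> \<longrightarrow> D \<inter> \<U> \<noteq> {})"

definition scott_QRl :: "real set topology" where
  "scott_QRl = topology scott_open_QRl"

definition valuation :: "'a topology \<Rightarrow> ('a set \<Rightarrow> ennreal) \<Rightarrow> bool" where
  "valuation X \<nu> \<longleftrightarrow> \<nu> {} = 0
     \<and> (\<forall>U V. openin X U \<and> openin X V \<and> U \<subseteq> V \<longrightarrow> \<nu> U \<le> \<nu> V)
     \<and> (\<forall>U V. openin X U \<and> openin X V \<longrightarrow> \<nu> U + \<nu> V = \<nu> (U \<union> V) + \<nu> (U \<inter> V))"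

definition continuous_valuation :: "'a topology \<Rightarrow> ('a set \<Rightarrow> ennreal) \<Rightarrow> bool" where
  "continuous_valuation X \<nu> \<longleftrightarrow> valuation X \<nu>
     \<and> (\<forall>\<D>. \<D> \<noteq> {} \<and> (\<forall>U\<in>\<D>. openin X U)
           \<and> (\<forall>U\<in>\<D>. \<forall>V\<in>\<D>. \<exists>W\<in>\<D>. U \<subseteq> W \<and> V \<subseteq> W)
           \<longrightarrow> \<nu> (\<Union>\<D>) = (SUP U\<in>\<D>. \<nu> U))"

definition point_continuous :: "'a topology \<Rightarrow> ('a set \<Rightarrow> ennreal) \<Rightarrow> bool" where
  "point_continuous X \<nu> \<longleftrightarrow>
     (\<forall>U (r::real). openin X U \<and> 0 \<le> r \<and> ennreal r < \<nu> U \<longrightarrow>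
        (\<exists>A. finite A \<and> A \<subseteq> U \<and> (\<forall>V. openin X V \<and> A \<subseteq> V \<longrightarrow> ennreal r < \<nu> V)))"

definition mubar :: "real measure \<Rightarrow> real set set \<Rightarrow> ennreal" where
  "mubar M \<U> = emeasure M {x. {x} \<in> \<U>}"

end

theory Submission
  imports Defs
begin

text \<open>A compact subset \<open>K\<close> of the Sorgenfrey line leaves a gap to the left of every point
  \<open>x\<close>, because \<open>K \<inter> {..<x}\<close> is compact for the euclidean topology; hence \<open>K\<close> is
  countable. A Sorgenfrey-open set is its euclidean interior plus countably many points, so
  these sets are Borel and the Sorgenfrey line is hereditarily Lindelof: a directed union of
  Scott-open sets reduces to a countable increasing one, and \<open>mubar M\<close> is a continuous
  valuation. It is not point-continuous: the Scott-open set of compacts inside \<open>U\<close> has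
  value \<open>\<mu>(U)\<close>, while any finite set \<open>A\<close> of such compacts has a countable, hence null, union;
  by outer regularity that union lies in a Sorgenfrey-open \<open>W \<subseteq> U\<close> with
  \<open>\<mu>(W) < \<mu>(U)/2\<close>, and the Scott-open set of compacts inside \<open>W\<close> contains \<open>A\<close> but has
  value \<open>\<mu>(W)\<close>.\<close>

lemma openin_sorgenfrey_iff:
  "openin sorgenfrey U \<longleftrightarrow> (\<forall>x\<in>U. \<exists>d>0. {x..<x+d} \<subseteq> U)"
proof
  assume "openin sorgenfrey U"
  then have "generate_topology_on {{a..<b} | a b. a < b} U"
    unfolding sorgenfrey_def by (rule openin_topology_generated_by)
  then show "\<forall>x\<in>U. \<exists>d>0. {x..<x+d} \<subseteq> U"
  proof induction
    case (Int a b)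
    show ?case
    proof
      fix x assume "x \<in> a \<inter> b"
      then obtain d1 d2 where "d1 > 0" "{x..<x+d1} \<subseteq> a" "d2 > 0" "{x..<x+d2} \<subseteq> b"
        using Int.IH by blast
      moreover have "{x..<x + min d1 d2} \<subseteq> {x..<x+d1}" "{x..<x + min d1 d2} \<subseteq> {x..<x+d2}"
        by auto
      ultimately have "{x..<x + min d1 d2} \<subseteq> a \<inter> b" by blast
      moreover have "min d1 d2 > 0" using \<open>d1 > 0\<close> \<open>d2 > 0\<close> by simp
      ultimately show "\<exists>d>0. {x..<x+d} \<subseteq> a \<inter> b" by blast
    qed
  next
    case (UN K)
    then show ?case by (meson Union_iff Union_upper subset_trans)
  next
    case (Basis s)
    then obtain a b where "s = {a..<b}" by auto
    then show ?case by (intro ballI exI[of _ "b - x" for x]) auto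
  qed simp
next
  assume "\<forall>x\<in>U. \<exists>d>0. {x..<x+d} \<subseteq> U"
  then obtain d where d: "\<And>x. x \<in> U \<Longrightarrow> d x > 0 \<and> {x..<x + d x} \<subseteq> U" by metis
  have "openin sorgenfrey (\<Union>x\<in>U. {x..<x + d x})"
    unfolding sorgenfrey_def
    by (intro openin_Union topology_generated_by_Basis) (use d in force)
  moreover have "(\<Union>x\<in>U. {x..<x + d x}) = U"
    using d by fastforce
  ultimately show "openin sorgenfrey U" by simp
qed

lemma topspace_sorgenfrey [simp]: "topspace sorgenfrey = UNIV"
proof -
  have "openin sorgenfrey UNIV"
    unfolding openin_sorgenfrey_iff using zero_less_one by blast
  then show ?thesis using openin_subset by blast
qed

lemma open_imp_openin_sorgenfrey:
  assumes "open U" shows "openin sorgenfrey U"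
  unfolding openin_sorgenfrey_iff
proof
  fix x assume "x \<in> U"
  then obtain e where "e > 0" "ball x e \<subseteq> U" using assms open_contains_ball by blast
  moreover have "{x..<x+e} \<subseteq> ball x e" by (auto simp: dist_real_def)
  ultimately show "\<exists>d>0. {x..<x+d} \<subseteq> U" by blast
qed

lemma continuous_map_sorgenfrey_euclidean: "continuous_map sorgenfrey euclidean id"
proof -
  have "openin sorgenfrey {x \<in> topspace sorgenfrey. id x \<in> U}" if "open U" for U
    using open_imp_openin_sorgenfrey[OF that] by simp
  then show ?thesis by (simp add: continuous_map_def)
qed

lemma Hausdorff_space_sorgenfrey: "Hausdorff_space sorgenfrey"
  unfolding Hausdorff_space_def
proof (intro allI impI)
  fix x y :: real assume "x \<in> topspace sorgenfrey \<and> y \<in> topspace sorgenfrey \<and> x \<noteq> y"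
  then have "x \<noteq> y" by simp
  from hausdorff[OF this] obtain U V where "open U" "open V" "x \<in> U" "y \<in> V" "U \<inter> V = {}"
    by blast
  then show "\<exists>U V. openin sorgenfrey U \<and> openin sorgenfrey V \<and> x \<in> U \<and> y \<in> V \<and> disjnt U V"
    unfolding disjnt_def using open_imp_openin_sorgenfrey by blast
qed

lemma compactin_sorgenfrey_imp_compact: "compactin sorgenfrey K \<Longrightarrow> compact K"
proof -
  assume "compactin sorgenfrey K"
  then have "compactin euclidean (id ` K)"
    by (rule image_compactin[OF _ continuous_map_sorgenfrey_euclidean])
  then show "compact K" by simp
qed

lemma countable_disjoint_intervals:
  fixes S :: "real set" and a b :: "real \<Rightarrow> real"
  assumes ab: "\<And>x. x \<in> S \<Longrightarrow> a x < b x"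
    and disj: "\<And>x y. x \<in> S \<Longrightarrow> y \<in> S \<Longrightarrow> x < y \<Longrightarrow> b x \<le> a y"
  shows "countable S"
proof -
  have "\<forall>x\<in>S. \<exists>r\<in>\<rat>. a x < r \<and> r < b x"
    using ab Rats_dense_in_real by blast
  then obtain q where q: "\<And>x. x \<in> S \<Longrightarrow> q x \<in> \<rat> \<and> a x < q x \<and> q x < b x"
    by metis
  have "inj_on q S"
  proof (rule inj_onI, rule ccontr)
    fix x y assume xy: "x \<in> S" "y \<in> S" "q x = q y" "x \<noteq> y"
    then show False
      using q[OF xy(1)] q[OF xy(2)] disj[OF xy(1) xy(2)] disj[OF xy(2) xy(1)]
      by (cases "x < y") force+
  qed
  moreover have "countable (q ` S)"
    using q countable_rat countable_subset[of "q ` S" \<rat>] by blast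
  ultimately show ?thesis using countable_image_inj_on by blast
qed

lemma compactin_sorgenfrey_left_gap:
  assumes K: "compactin sorgenfrey K"
  shows "\<exists>e>0. K \<inter> {x-e<..<x} = {}"
proof -
  have "openin sorgenfrey {x..}"
    unfolding openin_sorgenfrey_iff by (auto intro!: exI[of _ 1])
  moreover have "topspace sorgenfrey - {..<x} = {x..}"
    by auto
  ultimately have "closedin sorgenfrey {..<x}"
    by (simp add: closedin_def)
  then have "compact ({..<x} \<inter> K)"
    using K closed_Int_compactin compactin_sorgenfrey_imp_compact by blast
  show ?thesis
  proof (cases "{..<x} \<inter> K = {}")
    case True
    then show ?thesis by (intro exI[of _ 1]) auto
  next
    case False
    with \<open>compact ({..<x} \<inter> K)\<close> obtain m where m: "m \<in> {..<x} \<inter> K" "\<forall>y\<in>{..<x} \<inter> K. y \<le> m"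
      using compact_attains_sup by blast
    then have "K \<inter> {m<..<x} = {}"
      by force
    with m(1) show ?thesis
      by (intro exI[of _ "x - m"]) auto
  qed
qed

lemma countable_compactin_sorgenfrey:
  assumes K: "compactin sorgenfrey K" shows "countable K"
proof -
  obtain e where e: "\<And>x. x \<in> K \<Longrightarrow> e x > 0 \<and> K \<inter> {x - e x<..<x} = {}"
    using compactin_sorgenfrey_left_gap[OF K] by metis
  show ?thesis
  proof (rule countable_disjoint_intervals[of K "\<lambda>x. x - e x" "\<lambda>x. x"])
    fix x y assume "x \<in> K" "y \<in> K" "x < y"
    then have "x \<notin> {y - e y<..<y}" using e[of y] by blast
    then show "x \<le> y - e y" using \<open>x < y\<close> by auto
  qed (use e in auto)
qed

text \<open>Each point \<open>x\<close> of the difference starts an interval \<open>{x..<x + d x}\<close> inside some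
  \<open>F x \<in> \<F>\<close>; its open part lies in the interior of \<open>F x\<close>, so it contains no other
  point of the difference.\<close>
lemma countable_Union_diff_Union_interior:
  assumes "\<And>F. F \<in> \<F> \<Longrightarrow> openin sorgenfrey F"
  shows "countable (\<Union>\<F> - \<Union>(interior ` \<F>))" (is "countable ?R")
proof -
  have "\<forall>x\<in>?R. \<exists>F d. F \<in> \<F> \<and> d > 0 \<and> {x..<x + d} \<subseteq> F"
  proof
    fix x assume "x \<in> ?R"
    then obtain F where "F \<in> \<F>" "x \<in> F" by blast
    then show "\<exists>F d. F \<in> \<F> \<and> d > 0 \<and> {x..<x + d} \<subseteq> F"
      using assms[of F] unfolding openin_sorgenfrey_iff by blast
  qed
  then obtain F d where Fd: "\<And>x. x \<in> ?R \<Longrightarrow> F x \<in> \<F> \<and> d x > 0 \<and> {x..<x + d x} \<subseteq> F x"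
    by metis
  show ?thesis
  proof (rule countable_disjoint_intervals[of ?R "\<lambda>x. x" "\<lambda>x. x + d x"])
    fix x y assume xy: "x \<in> ?R" "y \<in> ?R" "x < y"
    have "{x<..<x + d x} \<subseteq> interior (F x)"
      using Fd[OF xy(1)] by (intro interior_maximal) auto
    moreover have "y \<notin> interior (F x)"
      using xy(2) Fd[OF xy(1)] by blast
    ultimately show "x + d x \<le> y"
      using xy(3) by (meson greaterThanLessThan_iff not_le subsetD)
  qed (use Fd in auto)
qed

lemma openin_sorgenfrey_imp_borel:
  assumes "openin sorgenfrey U" shows "U \<in> sets borel"
proof -
  have "countable (U - interior U)"
    using countable_Union_diff_Union_interior[of "{U}"] assms by simp
  then have "U - interior U \<in> sets borel"
    using countable_imp_null_set_lborel null_setsD2 by force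
  moreover have "U = interior U \<union> (U - interior U)"
    using interior_subset by blast
  ultimately show ?thesis by (metis borel_open open_interior sets.Un)
qed

lemma sorgenfrey_Lindelof:
  assumes "\<And>i. i \<in> I \<Longrightarrow> openin sorgenfrey (f i)"
  obtains J where "J \<subseteq> I" "countable J" "(\<Union>i\<in>J. f i) = (\<Union>i\<in>I. f i)"
proof -
  obtain \<G> where \<G>: "\<G> \<subseteq> (interior \<circ> f) ` I" "countable \<G>" "\<Union>\<G> = (\<Union>i\<in>I. interior (f i))"
    using Lindelof[of "(interior \<circ> f) ` I"] by auto
  then obtain J1 where J1: "J1 \<subseteq> I" "countable J1" "\<G> = (interior \<circ> f) ` J1"
    using countable_subset_image by metis
  define R where "R = (\<Union>i\<in>I. f i) - (\<Union>i\<in>I. interior (f i))"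
  have "\<And>F. F \<in> f ` I \<Longrightarrow> openin sorgenfrey F"
    using assms by blast
  from countable_Union_diff_Union_interior[of "f ` I", OF this] have "countable R"
    unfolding R_def by (simp add: image_image)
  obtain k where k: "\<And>x. x \<in> R \<Longrightarrow> k x \<in> I \<and> x \<in> f (k x)"
    unfolding R_def by (metis DiffD1 UN_E)
  show ?thesis
  proof (rule that[of "J1 \<union> k ` R"])
    show "J1 \<union> k ` R \<subseteq> I" "countable (J1 \<union> k ` R)"
      using J1 k \<open>countable R\<close> by auto
    have "(\<Union>i\<in>J1. interior (f i)) = (\<Union>i\<in>I. interior (f i))"
      using \<G> J1(3) by simp
    then have "(\<Union>i\<in>I. f i) \<subseteq> (\<Union>i\<in>J1. interior (f i)) \<union> R"
      unfolding R_def by blast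
    also have "\<dots> \<subseteq> (\<Union>i\<in>J1. f i) \<union> (\<Union>i\<in>k ` R. f i)"
      using interior_subset k by (intro Un_mono UN_mono) auto
    finally have "(\<Union>i\<in>I. f i) \<subseteq> (\<Union>i\<in>J1 \<union> k ` R. f i)"
      by (simp only: UN_Un)
    moreover have "(\<Union>i\<in>J1 \<union> k ` R. f i) \<subseteq> (\<Union>i\<in>I. f i)"
      using J1(1) k by (intro UN_mono) auto
    ultimately show "(\<Union>i\<in>J1 \<union> k ` R. f i) = (\<Union>i\<in>I. f i)"
      by (rule antisym[rotated])
  qed
qed

lemma directed_finite_upper_bound:
  assumes "transp R" and dir: "\<And>a b. a \<in> D \<Longrightarrow> b \<in> D \<Longrightarrow> \<exists>c\<in>D. R a c \<and> R b c"
    and "D \<noteq> {}" "finite F" "F \<subseteq> D"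
  shows "\<exists>c\<in>D. \<forall>a\<in>F. R a c"
  using \<open>finite F\<close> \<open>F \<subseteq> D\<close>
proof (induction F rule: finite_induct)
  case empty
  then show ?case using \<open>D \<noteq> {}\<close> by blast
next
  case (insert a F)
  then obtain c where c: "c \<in> D" "\<forall>b\<in>F. R b c" by blast
  obtain c' where c': "c' \<in> D" "R a c'" "R c c'"
    using dir[of a c] insert.prems c(1) by blast
  have "\<forall>b\<in>F. R b c'"
    using c(2) c'(3) transpD[OF \<open>transp R\<close>] by blast
  with c' show ?case by blast
qed

lemma compactin_filtered_Inter_subset:
  assumes X: "Hausdorff_space X" and W: "openin X W"
    and D: "D \<noteq> {}" "\<And>K. K \<in> D \<Longrightarrow> compactin X K"
    and filtered: "\<And>K L. K \<in> D \<Longrightarrow> L \<in> D \<Longrightarrow> \<exists>M\<in>D. M \<subseteq> K \<and> M \<subseteq> L"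
    and "\<Inter>D \<subseteq> W"
  shows "\<exists>K\<in>D. K \<subseteq> W"
proof -
  obtain K0 where K0: "K0 \<in> D" using D by blast
  let ?\<C> = "(\<lambda>K. K - W) ` D"
  have "\<forall>C\<in>?\<C>. closedin X C"
    using D(2) W X compactin_imp_closedin closedin_diff by blast
  moreover have "K0 \<inter> \<Inter>?\<C> = {}"
    using \<open>\<Inter>D \<subseteq> W\<close> K0 by blast
  ultimately obtain \<F> where "finite \<F>" "\<F> \<subseteq> ?\<C>" "K0 \<inter> \<Inter>\<F> = {}"
    using compactin_fip[THEN iffD1, OF D(2)[OF K0]] by blast
  then obtain G where G: "finite G" "G \<subseteq> D" "\<F> = (\<lambda>K. K - W) ` G"
    by (meson finite_subset_image)
  have "transp (\<lambda>L K. K \<subseteq> L)"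
    by (auto intro: transpI)
  then obtain K where K: "K \<in> D" "\<forall>L\<in>insert K0 G. K \<subseteq> L"
    using directed_finite_upper_bound[of "\<lambda>L K. K \<subseteq> L" D "insert K0 G"] filtered D(1) G K0
    by auto
  have "K \<subseteq> W"
  proof
    fix z assume "z \<in> K"
    show "z \<in> W"
    proof (rule ccontr)
      assume "z \<notin> W"
      then have "z \<in> K0 \<inter> \<Inter>\<F>" using K G(3) \<open>z \<in> K\<close> by blast
      with \<open>K0 \<inter> \<Inter>\<F> = {}\<close> show False by blast
    qed
  qed
  with K(1) show ?thesis by blast
qed

lemma scott_open_QRlD:
  assumes "scott_open_QRl \<U>"
  shows "\<U> \<subseteq> QRl"
    and "K \<in> \<U> \<Longrightarrow> L \<in> QRl \<Longrightarrow> L \<subseteq> K \<Longrightarrow> L \<in> \<U>"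
    and "D \<subseteq> QRl \<Longrightarrow> rev_directed D \<Longrightarrow> \<Inter>D \<in> \<U> \<Longrightarrow> \<exists>K\<in>D. K \<in> \<U>"
  using assms unfolding scott_open_QRl_def by blast+

lemma scott_open_QRlI:
  assumes "\<U> \<subseteq> QRl"
    and "\<And>K L. K \<in> \<U> \<Longrightarrow> L \<in> QRl \<Longrightarrow> L \<subseteq> K \<Longrightarrow> L \<in> \<U>"
    and "\<And>D. D \<subseteq> QRl \<Longrightarrow> rev_directed D \<Longrightarrow> \<Inter>D \<in> \<U> \<Longrightarrow> \<exists>K\<in>D. K \<in> \<U>"
  shows "scott_open_QRl \<U>"
  using assms unfolding scott_open_QRl_def by blast

lemma scott_open_QRl_Int:
  assumes S: "scott_open_QRl S" and T: "scott_open_QRl T"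
  shows "scott_open_QRl (S \<inter> T)"
proof (rule scott_open_QRlI)
  show "S \<inter> T \<subseteq> QRl"
    using scott_open_QRlD(1)[OF S] by blast
  show "L \<in> S \<inter> T" if "K \<in> S \<inter> T" "L \<in> QRl" "L \<subseteq> K" for K L
    using scott_open_QRlD(2)[OF S _ that(2,3)] scott_open_QRlD(2)[OF T _ that(2,3)] that(1)
    by simp
  show "\<exists>K\<in>D. K \<in> S \<inter> T" if D: "D \<subseteq> QRl" "rev_directed D" "\<Inter>D \<in> S \<inter> T" for D
  proof -
    obtain K1 where K1: "K1 \<in> D" "K1 \<in> S"
      using scott_open_QRlD(3)[OF S D(1,2)] D(3) by auto
    obtain K2 where K2: "K2 \<in> D" "K2 \<in> T"
      using scott_open_QRlD(3)[OF T D(1,2)] D(3) by auto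
    obtain K3 where K3: "K3 \<in> D" "K3 \<subseteq> K1" "K3 \<subseteq> K2"
      using D(2) K1(1) K2(1) unfolding rev_directed_def by blast
    have "K3 \<in> QRl" using D(1) K3(1) by blast
    then have "K3 \<in> S \<inter> T"
      using scott_open_QRlD(2)[OF S K1(2) _ K3(2)] scott_open_QRlD(2)[OF T K2(2) _ K3(3)] by simp
    with K3(1) show ?thesis by blast
  qed
qed

lemma scott_open_QRl_Union:
  assumes \<K>: "\<And>S. S \<in> \<K> \<Longrightarrow> scott_open_QRl S"
  shows "scott_open_QRl (\<Union>\<K>)"
proof (rule scott_open_QRlI)
  show "\<Union>\<K> \<subseteq> QRl"
    using \<K> scott_open_QRlD(1) by blast
  show "L \<in> \<Union>\<K>" if "K \<in> \<Union>\<K>" "L \<in> QRl" "L \<subseteq> K" for K L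
  proof -
    from that(1) obtain S where "S \<in> \<K>" "K \<in> S" by blast
    with \<K> that(2,3) have "L \<in> S" by (simp add: scott_open_QRlD(2))
    with \<open>S \<in> \<K>\<close> show ?thesis by blast
  qed
  show "\<exists>K\<in>D. K \<in> \<Union>\<K>" if "D \<subseteq> QRl" "rev_directed D" "\<Inter>D \<in> \<Union>\<K>" for D
  proof -
    from that(3) obtain S where "S \<in> \<K>" "\<Inter>D \<in> S" by blast
    with \<K> that(1,2) obtain K where "K \<in> D" "K \<in> S" by (meson scott_open_QRlD(3))
    with \<open>S \<in> \<K>\<close> show ?thesis by blast
  qed
qed

lemma istopology_scott_open_QRl: "istopology scott_open_QRl"
  unfolding istopology_def by (blast intro: scott_open_QRl_Int scott_open_QRl_Union)

lemma openin_scott_QRl: "openin scott_QRl \<U> \<longleftrightarrow> scott_open_QRl \<U>"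
  unfolding scott_QRl_def using topology_inverse'[OF istopology_scott_open_QRl] by simp

lemma scott_open_QRl_compacts_within:
  assumes "openin sorgenfrey W"
  shows "scott_open_QRl {K \<in> QRl. K \<subseteq> W}"
proof (rule scott_open_QRlI)
  fix D assume D: "D \<subseteq> QRl" "rev_directed D" "\<Inter>D \<in> {K \<in> QRl. K \<subseteq> W}"
  have "\<And>K. K \<in> D \<Longrightarrow> compactin sorgenfrey K"
    using D(1) unfolding QRl_def by blast
  then obtain K where "K \<in> D" "K \<subseteq> W"
    using compactin_filtered_Inter_subset[OF Hausdorff_space_sorgenfrey assms, of D] D(2,3)
    unfolding rev_directed_def by blast
  with D(1) show "\<exists>K\<in>D. K \<in> {K \<in> QRl. K \<subseteq> W}" by blast
qed auto

lemma singleton_in_QRl: "{x} \<in> QRl"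
  unfolding QRl_def by simp

lemma limitin_sorgenfrey_from_right:
  assumes "y \<longlonglongrightarrow> x" "\<And>n. x \<le> y n"
  shows "limitin sorgenfrey y x sequentially"
  unfolding limitin_def
proof (intro conjI allI impI)
  fix U assume "openin sorgenfrey U \<and> x \<in> U"
  then obtain d where d: "d > 0" "{x..<x+d} \<subseteq> U"
    unfolding openin_sorgenfrey_iff by blast
  then have "eventually (\<lambda>n. y n < x + d) sequentially"
    using assms(1) by (intro order_tendstoD(2)) auto
  then show "eventually (\<lambda>n. y n \<in> U) sequentially"
  proof (rule eventually_mono)
    fix n assume "y n < x + d"
    then show "y n \<in> U" using assms(2)[of n] d(2) by auto
  qed
qed simp

lemma QRl_insert_limit_tail:
  assumes "y \<longlonglongrightarrow> x" "\<And>n. x \<le> y n"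
  shows "insert x (y ` {n..}) \<in> QRl"
proof -
  have "limitin sorgenfrey (\<lambda>m. y (m + n)) x sequentially"
    using assms LIMSEQ_ignore_initial_segment by (intro limitin_sorgenfrey_from_right) auto
  moreover have "y ` {n..} \<subseteq> range (\<lambda>m. y (m + n))"
  proof (rule image_subsetI)
    fix k :: nat assume "k \<in> {n..}"
    then have "y k = y ((k - n) + n)" by simp
    then show "y k \<in> range (\<lambda>m. y (m + n))" by blast
  qed
  ultimately have "compactin sorgenfrey (insert x (y ` {n..}))"
    by (intro compactin_sequence_with_limit) auto
  then show ?thesis unfolding QRl_def by blast
qed

lemma Inter_insert_limit_tails:
  fixes y :: "nat \<Rightarrow> real"
  assumes "y \<longlonglongrightarrow> x" "\<And>n. x < y n"
  shows "(\<Inter>n. insert x (y ` {n..})) = {x}"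
proof (intro equalityI subsetI)
  fix z assume z: "z \<in> (\<Inter>n. insert x (y ` {n..}))"
  show "z \<in> {x}"
  proof (rule ccontr)
    assume "z \<notin> {x}"
    with z have "z \<in> range y" by blast
    with assms(2) have "x < z" by auto
    from order_tendstoD(2)[OF assms(1) this] obtain N where N: "\<And>n. n \<ge> N \<Longrightarrow> y n < z"
      unfolding eventually_sequentially by blast
    from z have "z \<in> insert x (y ` {N..})" by blast
    with \<open>z \<notin> {x}\<close> obtain k where "k \<ge> N" "z = y k" by auto
    with N show False by blast
  qed
qed auto

lemma sorgenfrey_non_interior_sequence:
  fixes S :: "real set"
  assumes "\<not> (\<exists>d>0. {x..<x+d} \<subseteq> S)"
  obtains y where "y \<longlonglongrightarrow> x" "\<And>n. x \<le> y n" "\<And>n. y n \<notin> S"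
proof -
  have "\<exists>y. x \<le> y \<and> y < x + inverse (Suc n) \<and> y \<notin> S" for n :: nat
  proof -
    have "inverse (real (Suc n)) > 0" by simp
    with assms have "\<not> {x..<x + inverse (Suc n)} \<subseteq> S" by blast
    then show ?thesis by auto
  qed
  then obtain y where y: "\<And>n. x \<le> y n" "\<And>n. y n < x + inverse (Suc n)" "\<And>n. y n \<notin> S"
    by metis
  have "y \<longlonglongrightarrow> x"
  proof (rule tendsto_sandwich[of "\<lambda>_. x" _ _ "\<lambda>n. x + inverse (Suc n)"])
    show "(\<lambda>n. x + inverse (Suc n)) \<longlonglongrightarrow> x"
      using tendsto_add[OF tendsto_const LIMSEQ_inverse_real_of_nat, of x] by simp
  qed (use y in \<open>auto intro!: always_eventually less_imp_le\<close>)
  then show thesis by (rule that[OF _ y(1) y(3)])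
qed

lemma rev_directed_range_antimono:
  fixes K :: "nat \<Rightarrow> real set"
  assumes "antimono K"
  shows "rev_directed (range K)"
  unfolding rev_directed_def
proof (intro conjI ballI)
  fix K1 K2 assume "K1 \<in> range K" "K2 \<in> range K"
  then obtain m n where "K1 = K m" "K2 = K n" by blast
  moreover have "K (max m n) \<subseteq> K m" "K (max m n) \<subseteq> K n"
    by (intro antimonoD[OF assms]; simp)+
  ultimately show "\<exists>K3\<in>range K. K3 \<subseteq> K1 \<and> K3 \<subseteq> K2" by blast
qed simp

lemma openin_sorgenfrey_points_of_scott_open:
  assumes \<U>: "scott_open_QRl \<U>"
  shows "openin sorgenfrey {x. {x} \<in> \<U>}"
  unfolding openin_sorgenfrey_iff
proof (intro ballI, rule ccontr)
  fix x assume x: "x \<in> {x. {x} \<in> \<U>}" and nd: "\<not> (\<exists>d>0. {x..<x+d} \<subseteq> {x. {x} \<in> \<U>})"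
  obtain y where y: "y \<longlonglongrightarrow> x" "\<And>n. x \<le> y n" "\<And>n. y n \<notin> {x. {x} \<in> \<U>}"
    using sorgenfrey_non_interior_sequence[OF nd] by blast
  have y_gt: "x < y n" for n
  proof -
    have "y n \<noteq> x" using x y(3)[of n] by auto
    with y(2)[of n] show ?thesis by simp
  qed
  define K where "K n = insert x (y ` {n..})" for n
  have "range K \<subseteq> QRl"
    unfolding K_def using QRl_insert_limit_tail[OF y(1,2)] by blast
  moreover have "rev_directed (range K)"
    by (rule rev_directed_range_antimono) (auto simp: antimono_def K_def)
  moreover have "\<Inter>(range K) = {x}"
    unfolding K_def using Inter_insert_limit_tails[OF y(1) y_gt] .
  with x have "\<Inter>(range K) \<in> \<U>" by simp
  ultimately obtain n where "K n \<in> \<U>"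
    using scott_open_QRlD(3)[OF \<U>] by blast
  moreover have "{y n} \<subseteq> K n" unfolding K_def by auto
  ultimately have "{y n} \<in> \<U>"
    using scott_open_QRlD(2)[OF \<U>] singleton_in_QRl by blast
  with y(3)[of n] show False by simp
qed

lemma borel_points_of_scott_open:
  "scott_open_QRl \<U> \<Longrightarrow> {x. {x} \<in> \<U>} \<in> sets borel"
  using openin_sorgenfrey_imp_borel openin_sorgenfrey_points_of_scott_open by blast

lemma emeasure_UN_countable_le_SUP_directed:
  assumes A: "\<And>i. i \<in> I \<Longrightarrow> A i \<in> sets M"
    and dir: "\<And>i j. i \<in> I \<Longrightarrow> j \<in> I \<Longrightarrow> \<exists>k\<in>I. A i \<subseteq> A k \<and> A j \<subseteq> A k"
    and J: "J \<subseteq> I" "countable J"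
  shows "emeasure M (\<Union>i\<in>J. A i) \<le> (SUP i\<in>I. emeasure M (A i))"
proof (cases "J = {}")
  case True
  then show ?thesis by simp
next
  case False
  define g where "g = from_nat_into J"
  have "range g = J"
    unfolding g_def using range_from_nat_into[OF False J(2)] .
  with J(1) have g: "g n \<in> I" for n
    by blast
  define B where "B n = (\<Union>k\<le>n. A (g k))" for n
  have "range B \<subseteq> sets M"
    unfolding B_def using A g by auto
  moreover have "incseq B"
    unfolding B_def by (intro incseq_SucI) (auto simp: atMost_Suc)
  moreover have "(\<Union>n. B n) = (\<Union>n. A (g n))"
    unfolding B_def by blast
  moreover have "\<dots> = (\<Union>i\<in>J. A i)"
    using \<open>range g = J\<close> by auto
  ultimately have "emeasure M (\<Union>i\<in>J. A i) = (SUP n. emeasure M (B n))"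
    using SUP_emeasure_incseq[of B M] by simp
  also have "\<dots> \<le> (SUP i\<in>I. emeasure M (A i))"
  proof (rule SUP_least)
    fix n
    have "transp (\<lambda>i k. A i \<subseteq> A k)"
      by (auto intro: transpI)
    moreover have "I \<noteq> {}" "finite (g ` {..n})" "g ` {..n} \<subseteq> I"
      using g by auto
    ultimately obtain i where i: "i \<in> I" "\<forall>k\<in>g ` {..n}. A k \<subseteq> A i"
      using directed_finite_upper_bound[of "\<lambda>i k. A i \<subseteq> A k" I, OF _ dir] by blast
    then have "B n \<subseteq> A i"
      unfolding B_def by blast
    then have "emeasure M (B n) \<le> emeasure M (A i)"
      using A i(1) by (intro emeasure_mono) auto
    with i(1) show "emeasure M (B n) \<le> (SUP i\<in>I. emeasure M (A i))"
      by (blast intro: SUP_upper2)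
  qed
  finally show ?thesis .
qed

lemma emeasure_UN_directed_countable_subcover:
  assumes A: "\<And>i. i \<in> I \<Longrightarrow> A i \<in> sets M"
    and dir: "\<And>i j. i \<in> I \<Longrightarrow> j \<in> I \<Longrightarrow> \<exists>k\<in>I. A i \<subseteq> A k \<and> A j \<subseteq> A k"
    and J: "J \<subseteq> I" "countable J" "(\<Union>i\<in>J. A i) = (\<Union>i\<in>I. A i)"
  shows "emeasure M (\<Union>i\<in>I. A i) = (SUP i\<in>I. emeasure M (A i))"
proof (rule antisym)
  show "emeasure M (\<Union>i\<in>I. A i) \<le> (SUP i\<in>I. emeasure M (A i))"
    using emeasure_UN_countable_le_SUP_directed[OF A dir J(1,2)] J(3) by simp
  have "(\<Union>i\<in>J. A i) \<in> sets M"
    using J(1,2) A by (intro sets.countable_UN') auto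
  then have "(\<Union>i\<in>I. A i) \<in> sets M"
    using J(3) by simp
  then show "(SUP i\<in>I. emeasure M (A i)) \<le> emeasure M (\<Union>i\<in>I. A i)"
    by (intro SUP_least emeasure_mono) auto
qed

lemma continuous_valuation_mubar:
  assumes M: "sets M = sets borel"
  shows "continuous_valuation scott_QRl (mubar M)"
proof -
  let ?P = "\<lambda>\<U>. {x. {x} \<in> \<U>}"
  have pts: "?P \<U> \<in> sets M" if "scott_open_QRl \<U>" for \<U>
    using borel_points_of_scott_open[OF that] M by simp
  show ?thesis
    unfolding continuous_valuation_def valuation_def openin_scott_QRl mubar_def
  proof (intro conjI allI impI)
    fix \<U> \<V> assume H: "scott_open_QRl \<U> \<and> scott_open_QRl \<V> \<and> \<U> \<subseteq> \<V>"
    then have "?P \<U> \<subseteq> ?P \<V>" by auto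
    moreover have "?P \<V> \<in> sets M" using H pts by blast
    ultimately show "emeasure M (?P \<U>) \<le> emeasure M (?P \<V>)"
      by (rule emeasure_mono)
  next
    fix \<U> \<V> assume H: "scott_open_QRl \<U> \<and> scott_open_QRl \<V>"
    then have "emeasure M (?P \<U>) + emeasure M (?P \<V>) =
        emeasure M (?P \<U> \<union> ?P \<V>) + emeasure M (?P \<U> \<inter> ?P \<V>)"
      using pts by (intro emeasure_Un_Int) blast+
    moreover have "?P (\<U> \<union> \<V>) = ?P \<U> \<union> ?P \<V>" "?P (\<U> \<inter> \<V>) = ?P \<U> \<inter> ?P \<V>"
      by auto
    ultimately show "emeasure M (?P \<U>) + emeasure M (?P \<V>) =
        emeasure M (?P (\<U> \<union> \<V>)) + emeasure M (?P (\<U> \<inter> \<V>))"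
      by simp
  next
    fix \<D> assume \<D>: "\<D> \<noteq> {} \<and> (\<forall>\<U>\<in>\<D>. scott_open_QRl \<U>)
      \<and> (\<forall>\<U>\<in>\<D>. \<forall>\<V>\<in>\<D>. \<exists>\<W>\<in>\<D>. \<U> \<subseteq> \<W> \<and> \<V> \<subseteq> \<W>)"
    have sets: "?P \<U> \<in> sets M" if "\<U> \<in> \<D>" for \<U>
      using \<D> that pts by blast
    have dir: "\<exists>\<W>\<in>\<D>. ?P \<U> \<subseteq> ?P \<W> \<and> ?P \<V> \<subseteq> ?P \<W>" if "\<U> \<in> \<D>" "\<V> \<in> \<D>" for \<U> \<V>
    proof -
      from \<D> that obtain \<W> where "\<W> \<in> \<D>" "\<U> \<subseteq> \<W>" "\<V> \<subseteq> \<W>" by blast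
      then show ?thesis by (intro bexI[of _ \<W>]) auto
    qed
    have "openin sorgenfrey (?P \<U>)" if "\<U> \<in> \<D>" for \<U>
      using \<D> that openin_sorgenfrey_points_of_scott_open by blast
    then obtain \<J> where "\<J> \<subseteq> \<D>" "countable \<J>" "(\<Union>\<U>\<in>\<J>. ?P \<U>) = (\<Union>\<U>\<in>\<D>. ?P \<U>)"
      by (rule sorgenfrey_Lindelof)
    with sets dir have "emeasure M (\<Union>\<U>\<in>\<D>. ?P \<U>) = (SUP \<U>\<in>\<D>. emeasure M (?P \<U>))"
      by (rule emeasure_UN_directed_countable_subcover)
    moreover have "?P (\<Union>\<D>) = (\<Union>\<U>\<in>\<D>. ?P \<U>)" by auto
    ultimately show "emeasure M (?P (\<Union>\<D>)) = (SUP \<U>\<in>\<D>. emeasure M (?P \<U>))"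
      by simp
  qed simp
qed

lemma mubar_compacts_within: "mubar M {K \<in> QRl. K \<subseteq> W} = emeasure M W"
proof -
  have "{x. {x} \<in> {K \<in> QRl. K \<subseteq> W}} = W"
    using singleton_in_QRl by auto
  then show ?thesis unfolding mubar_def by simp
qed

lemma emeasure_countable_null_singletons:
  assumes "countable C" "\<And>x. x \<in> C \<Longrightarrow> {x} \<in> sets M" "\<And>x. x \<in> C \<Longrightarrow> emeasure M {x} = 0"
  shows "emeasure M C = 0"
proof -
  have "emeasure M C = (\<integral>\<^sup>+x. emeasure M {x} \<partial>count_space C)"
    using assms(1,2) by (intro emeasure_countable_singleton) auto
  also have "\<dots> = (\<integral>\<^sup>+x. 0 \<partial>count_space C)"
    using assms(3) by (intro nn_integral_cong) auto
  finally show ?thesis by simp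
qed

lemma null_subset_small_open_superset:
  fixes M :: "'a::{second_countable_topology, complete_space} measure"
  assumes M: "sets M = sets borel" and U: "U \<in> sets borel" "emeasure M U < \<infinity>"
    and C: "C \<in> sets borel" "C \<subseteq> U" "emeasure M C = 0" and "0 < e"
  shows "\<exists>G. open G \<and> C \<subseteq> G \<and> emeasure M (U \<inter> G) < e"
proof -
  define N where "N = density M (indicator U)"
  have sets_N: "sets N = sets borel"
    unfolding N_def using M by simp
  have N: "emeasure N X = emeasure M (U \<inter> X)" if "X \<in> sets borel" for X
    unfolding N_def using U(1) that M by (intro emeasure_restricted) auto
  have "space N = UNIV"
    using sets_eq_imp_space_eq[OF sets_N] by simp
  then have "emeasure N (space N) \<noteq> \<infinity>"
    using N[of UNIV] U(2) by simp
  moreover have "emeasure N C = 0"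
    using N[OF C(1)] C(2,3) by (simp add: Int_absorb1)
  ultimately have "(INF G\<in>{G. C \<subseteq> G \<and> open G}. emeasure N G) < e"
    using outer_regular[OF sets_N _ C(1)] \<open>0 < e\<close> by simp
  then obtain G where "C \<subseteq> G" "open G" "emeasure N G < e"
    unfolding INF_less_iff by auto
  then show ?thesis
    using N[of G] by auto
qed

lemma countable_Union_QRl:
  assumes "countable A" "A \<subseteq> QRl"
  shows "countable (\<Union>A)"
proof -
  have "countable (\<Union>K\<in>A. K)"
    using assms countable_compactin_sorgenfrey unfolding QRl_def by blast
  then show ?thesis by simp
qed

lemma small_sorgenfrey_open_superset_of_countable:
  assumes M: "sets M = sets borel"
    and U: "openin sorgenfrey U" "emeasure M U < \<infinity>"
    and atomless: "\<And>x. x \<in> U \<Longrightarrow> emeasure M {x} = 0"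
    and C: "countable C" "C \<subseteq> U" and "0 < e"
  obtains W where "openin sorgenfrey W" "C \<subseteq> W" "W \<subseteq> U" "emeasure M W < e"
proof -
  have "C \<in> sets borel"
    using null_setsD2[OF countable_imp_null_set_lborel[OF C(1)]] by simp
  moreover have "emeasure M C = 0"
  proof (rule emeasure_countable_null_singletons[OF C(1)])
    fix x assume "x \<in> C"
    show "{x} \<in> sets M"
      unfolding M by (intro borel_closed closed_singleton)
    from \<open>x \<in> C\<close> C(2) have "x \<in> U" by blast
    then show "emeasure M {x} = 0" by (rule atomless)
  qed
  ultimately have "\<exists>G. open G \<and> C \<subseteq> G \<and> emeasure M (U \<inter> G) < e"
    using null_subset_small_open_superset[OF M openin_sorgenfrey_imp_borel[OF U(1)] U(2)]
      C(2) \<open>0 < e\<close> by blast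
  then obtain G where G: "open G" "C \<subseteq> G" "emeasure M (U \<inter> G) < e"
    by blast
  show thesis
  proof (rule that)
    show "openin sorgenfrey (U \<inter> G)"
      by (rule openin_Int[OF U(1) open_imp_openin_sorgenfrey[OF G(1)]])
  qed (use G C(2) in auto)
qed

lemma not_point_continuous_mubar:
  assumes M: "sets M = sets borel"
    and U: "openin sorgenfrey U" "0 < emeasure M U" "emeasure M U < \<infinity>"
    and atomless: "\<And>x. x \<in> U \<Longrightarrow> emeasure M {x} = 0"
  shows "\<not> point_continuous scott_QRl (mubar M)"
proof
  assume pc: "point_continuous scott_QRl (mubar M)"
  define t where "t = enn2real (emeasure M U)"
  have t: "emeasure M U = ennreal t" "0 < t"
    using U(2,3) unfolding t_def by (auto simp: enn2real_positive_iff)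
  define r where "r = t / 2"
  have r: "0 < r" "ennreal r < emeasure M U"
    using t unfolding r_def by (auto simp: ennreal_less_iff)
  let ?\<U> = "{K \<in> QRl. K \<subseteq> U}"
  have "openin scott_QRl ?\<U>"
    unfolding openin_scott_QRl by (rule scott_open_QRl_compacts_within[OF U(1)])
  moreover have "ennreal r < mubar M ?\<U>"
    using r(2) by (simp add: mubar_compacts_within)
  moreover have "0 \<le> r"
    using r(1) by simp
  ultimately have "\<exists>A. finite A \<and> A \<subseteq> ?\<U> \<and> (\<forall>\<V>. openin scott_QRl \<V> \<and> A \<subseteq> \<V> \<longrightarrow> ennreal r < mubar M \<V>)"
    using point_continuous_def[THEN iffD1, OF pc, rule_format, of ?\<U> r] by blast
  then obtain A where A: "finite A" "A \<subseteq> ?\<U>"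
      and mubar_gt: "\<forall>\<V>. openin scott_QRl \<V> \<and> A \<subseteq> \<V> \<longrightarrow> ennreal r < mubar M \<V>"
    by blast
  have "countable (\<Union>A)"
    using A by (intro countable_Union_QRl countable_finite) auto
  moreover have "\<Union>A \<subseteq> U" "0 < ennreal r"
    using A(2) r(1) by auto
  ultimately obtain W where W: "openin sorgenfrey W" "\<Union>A \<subseteq> W" "emeasure M W < r"
    using small_sorgenfrey_open_superset_of_countable[OF M U(1,3) atomless] by metis
  let ?\<V> = "{K \<in> QRl. K \<subseteq> W}"
  have "openin scott_QRl ?\<V>"
    unfolding openin_scott_QRl by (rule scott_open_QRl_compacts_within[OF W(1)])
  moreover have "A \<subseteq> ?\<V>"
  proof
    fix K assume "K \<in> A"
    with A(2) W(2) have "K \<in> QRl" "K \<subseteq> W" by auto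
    then show "K \<in> ?\<V>" by simp
  qed
  ultimately have "ennreal r < mubar M ?\<V>"
    using mubar_gt by blast
  then have "ennreal r < emeasure M W"
    by (simp only: mubar_compacts_within)
  with W(3) show False
    using less_asym by blast
qed

theorem theorem4p21:
  fixes M :: "real measure"
  assumes "sets M = sets borel"
    and "\<exists>U. openin sorgenfrey U \<and> 0 < emeasure M U \<and> emeasure M U < \<infinity>
              \<and> (\<forall>x\<in>U. emeasure M {x} = 0)"
  shows "continuous_valuation scott_QRl (mubar M) \<and> \<not> point_continuous scott_QRl (mubar M)
         \<and> continuous_valuation scott_QRl (mubar lborel) \<and> \<not> point_continuous scott_QRl (mubar lborel)"
proof (intro conjI)
  show "continuous_valuation scott_QRl (mubar M)"
    using assms(1) by (rule continuous_valuation_mubar)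
  show "continuous_valuation scott_QRl (mubar lborel)"
    by (rule continuous_valuation_mubar) simp
  show "\<not> point_continuous scott_QRl (mubar M)"
    using assms not_point_continuous_mubar by blast
  have "{0..<1::real} \<in> {{a..<b} | a b. a < b}"
    by (intro CollectI exI[of _ 0] exI[of _ 1]) simp
  then have Ico: "openin sorgenfrey {0..<1::real}"
    unfolding sorgenfrey_def by (rule topology_generated_by_Basis)
  show "\<not> point_continuous scott_QRl (mubar lborel)"
    by (intro not_point_continuous_mubar[OF _ Ico]) auto
qed

end
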